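(* Let $d,n\ge1$, $L\ge0$, let $p_x,p_w$ be distributions on $\mathbb{R}^d$, let $x^{(1)},\dots,x^{(n+1)}$ be i.i.d. from $p_x$, $w_\star\sim p_w$, and $y^{(i)}=\langle w_\star,x^{(i)}\rangle$ for $i=1,\dots,n+1$. Let $$Z_0=\begin{bmatrix} x^{(1)} & \cdots & x^{(n)} & x^{(n+1)}\\ y^{(1)} & \cdots & y^{(n)} & 0\end{bmatrix},\qquad \bar Z_0=\begin{bmatrix} x^{(1)} & \cdots & x^{(n)} & x^{(n+1)}\\ y^{(1)} & \cdots & y^{(n)} & y^{(n+1)}\end{bmatrix},$$ and $M=\begin{bmatrix} I_n & 0\\ 0& 0\end{bmatrix}\in\mathbb{R}^{(n+1)\times(n+1)}$. For matrices $A_i,B_i\in\mathbb{R}^{d\times d}$ with $A_i$ symmetric ($i=0,\dots,L-1$), let $P_i=\begin{bmatrix}B_i&0\\0&1\end{bmatrix}$, $Q_i=\begin{bmatrix}A_i&0\\0&0\end{bmatrix}$, and define $Z_{i+1}=Z_i+\frac1nP_iZ_iM(Z_i^\top Q_iZ_i)$ and $\bar Z_{i+1}=\bar Z_i+\frac1nP_i\bar Z_iM(\bar Z_i^\top Q_i\bar Z_i)$. Let $\bar Y_L\in\mathbb{R}^{1\times(n+1)}$ be the last row of $\bar Z_L$. Then (assuming the expectations are finite) $$\mathbb{E}\Big[\big([Z_L]_{d+1,n+1}+w_\star^\top x^{(n+1)}\big)^2\Big]=\mathbb{E}\Big[\mathrm{Tr}\big((I-M)\bar Y_L^\top\bar 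Y_L(I-M)\big)\Big].$$
   Context: $[X]_{i,j}$ denotes the $(i,j)$ entry of a matrix; $I=I_{n+1}$. *)

theory Defs
  imports "HOL-Probability.Probability"
begin

text \<open>Matrices are represented as functions nat => nat => real (0-based indices);
  the dimensions are carried explicitly by the operations below.
  Vectors in R^d are functions nat => real, only the coordinates 0..d-1 matter.\<close>

type_synonym mat = "nat \<Rightarrow> nat \<Rightarrow> real"

definition mmul :: "nat \<Rightarrow> mat \<Rightarrow> mat \<Rightarrow> mat" where
  "mmul k X Y = (\<lambda>i j. \<Sum>l<k. X i l * Y l j)"

definition mtrans :: "mat \<Rightarrow> mat" where
  "mtrans X = (\<lambda>i j. X j i)"

definition madd :: "mat \<Rightarrow> mat \<Rightarrow> mat" where
  "madd X Y = (\<lambda>i j. X i j + Y i j)"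

definition msub :: "mat \<Rightarrow> mat \<Rightarrow> mat" where
  "msub X Y = (\<lambda>i j. X i j - Y i j)"

definition mscale :: "real \<Rightarrow> mat \<Rightarrow> mat" where
  "mscale c X = (\<lambda>i j. c * X i j)"

definition idm :: mat where
  "idm = (\<lambda>i j. if i = j then 1 else 0)"

definition mtrace :: "nat \<Rightarrow> mat \<Rightarrow> real" where
  "mtrace k X = (\<Sum>i<k. X i i)"

definition inner_d :: "nat \<Rightarrow> (nat \<Rightarrow> real) \<Rightarrow> (nat \<Rightarrow> real) \<Rightarrow> real" where
  "inner_d d u v = (\<Sum>k<d. u k * v k)"

text \<open>Z_0 (last entry of last row is 0) and bar Z_0 : (d+1) x (n+1);
  column j (0-based, j \<le> n) is x^(j+1); row d is the label row.\<close>
definition Z0 :: "nat \<Rightarrow> nat \<Rightarrow> (nat \<Rightarrow> nat \<Rightarrow> real) \<Rightarrow> (nat \<Rightarrow> real) \<Rightarrow> mat" where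
  "Z0 d n xs w = (\<lambda>i j. if i < d then xs j i
                        else if j < n then inner_d d w (xs j) else 0)"

definition Zbar0 :: "nat \<Rightarrow> nat \<Rightarrow> (nat \<Rightarrow> nat \<Rightarrow> real) \<Rightarrow> (nat \<Rightarrow> real) \<Rightarrow> mat" where
  "Zbar0 d n xs w = (\<lambda>i j. if i < d then xs j i else inner_d d w (xs j))"

definition Mmat :: "nat \<Rightarrow> mat" where
  "Mmat n = (\<lambda>i j. if i = j \<and> i < n then 1 else 0)"

definition Pmat :: "nat \<Rightarrow> mat \<Rightarrow> mat" where
  "Pmat d B = (\<lambda>r c. if r < d \<and> c < d then B r c else if r = d \<and> c = d then 1 else 0)"

definition Qmat :: "nat \<Rightarrow> mat \<Rightarrow> mat" where
  "Qmat d A = (\<lambda>r c. if r < d \<and> c < d then A r c else 0)"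

definition layer :: "nat \<Rightarrow> nat \<Rightarrow> mat \<Rightarrow> mat \<Rightarrow> mat \<Rightarrow> mat" where
  "layer d n A B Z = madd Z (mscale (1 / real n)
      (mmul (n+1) (mmul (n+1) (mmul (d+1) (Pmat d B) Z) (Mmat n))
                  (mmul (d+1) (mmul (d+1) (mtrans Z) (Qmat d A)) Z)))"

fun iterZ :: "nat \<Rightarrow> nat \<Rightarrow> (nat \<Rightarrow> mat) \<Rightarrow> (nat \<Rightarrow> mat) \<Rightarrow> mat \<Rightarrow> nat \<Rightarrow> mat" where
  "iterZ d n A B Z 0 = Z"
| "iterZ d n A B Z (Suc i) = layer d n (A i) (B i) (iterZ d n A B Z i)"

end

theory Submission
  imports Defs
begin

text \<open>A layer adds \<open>(1/n) P Z M (Z\<^sup>T Q Z)\<close>, and this update never reads the query label,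
  entry \<open>(d, n)\<close> (0-based): \<open>Q\<close> vanishes on the label row, so \<open>Z\<^sup>T Q Z\<close> only sees the feature
  rows, and \<open>M\<close> discards the query column of \<open>P Z\<close>. Since \<open>Z\<^sub>0\<close> and its completed version
  differ only by the query label \<open>y\<close> in that entry, both receive identical updates in every layer,
  so \<open>[Z\<^sub>L]\<^sub>d\<^sub>n + y\<close> is the query label of the completed iterate. The trace on the right-hand
  side is the square of that entry, so the identity already holds pointwise.\<close>

definition proj_diag :: "(nat \<Rightarrow> bool) \<Rightarrow> mat" where
  "proj_diag S = (\<lambda>i j. if i = j \<and> S i then 1 else 0)"

lemma Mmat_eq_proj_diag: "Mmat n = proj_diag (\<lambda>i. i < n)"
  by (auto simp: Mmat_def proj_diag_def)

lemma idm_minus_Mmat_eq_proj_diag: "msub idm (Mmat n) = proj_diag (\<lambda>i. n \<le> i)"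
  by (auto simp: msub_def idm_def Mmat_def proj_diag_def fun_eq_iff)

lemma mmul_proj_diag_left: "mmul k (proj_diag S) X i j = (if i < k \<and> S i then X i j else 0)"
proof -
  have "mmul k (proj_diag S) X i j = (\<Sum>l<k. if i = l then (if S i then X i j else 0) else 0)"
    unfolding mmul_def proj_diag_def by (intro sum.cong) auto
  then show ?thesis by simp
qed

lemma mmul_proj_diag_right: "mmul k X (proj_diag S) i j = (if j < k \<and> S j then X i j else 0)"
proof -
  have "mmul k X (proj_diag S) i j = (\<Sum>l<k. if l = j then (if S j then X i j else 0) else 0)"
    unfolding mmul_def proj_diag_def by (intro sum.cong) auto
  then show ?thesis by simp
qed

lemma mtrace_outer_product_query_block:
  "mtrace (n+1) (mmul (n+1) (mmul 1 (mmul (n+1) (msub idm (Mmat n)) (mtrans Y)) Y)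
                          (msub idm (Mmat n))) = (Y 0 n)\<^sup>2"
  by (simp add: idm_minus_Mmat_eq_proj_diag mmul_proj_diag_left mmul_proj_diag_right
      mtrace_def mmul_def[of "Suc 0"] mtrans_def power2_eq_square)

lemma mmul_mtrans_Qmat:
  "mmul (d+1) (mtrans Z) (Qmat d A) i l = (if l < d then \<Sum>k<d. Z k i * A k l else 0)"
  by (simp add: mmul_def mtrans_def Qmat_def)

lemma Qmat_quadratic_form_eq:
  "mmul (d+1) (mmul (d+1) (mtrans Z) (Qmat d A)) Z i j
     = (\<Sum>l<d. (\<Sum>k<d. Z k i * A k l) * Z l j)"
  unfolding mmul_def[of "d+1" _ Z] mmul_mtrans_Qmat by simp

lemma Qmat_quadratic_form_cong:
  assumes "\<forall>i<d. \<forall>j. Z i j = Z' i j"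
  shows "mmul (d+1) (mmul (d+1) (mtrans Z) (Qmat d A)) Z
       = mmul (d+1) (mmul (d+1) (mtrans Z') (Qmat d A)) Z'"
  unfolding fun_eq_iff Qmat_quadratic_form_eq using assms by simp

lemma mmul_Mmat_cong:
  assumes "\<forall>i\<le>d. \<forall>j<n. Z i j = Z' i j"
  shows "mmul (n+1) (mmul (d+1) P Z) (Mmat n) = mmul (n+1) (mmul (d+1) P Z') (Mmat n)"
  unfolding Mmat_eq_proj_diag mmul_proj_diag_right mmul_def[of "d+1"]
  using assms by (intro ext) (auto intro!: sum.cong)

definition label_shift :: "nat \<Rightarrow> nat \<Rightarrow> real \<Rightarrow> mat \<Rightarrow> mat \<Rightarrow> bool" where
  "label_shift d n c Z Zb \<longleftrightarrow>
     (\<forall>i<d. \<forall>j. Z i j = Zb i j) \<and> (\<forall>j<n. Z d j = Zb d j) \<and> Zb d n = Z d n + c"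

lemma layer_label_shift:
  assumes shift: "label_shift d n c Z Zb"
  shows "label_shift d n c (layer d n A B Z) (layer d n A B Zb)"
proof -
  have "\<forall>i\<le>d. \<forall>j<n. Z i j = Zb i j"
    using shift by (auto simp: label_shift_def le_less)
  then have "mmul (n+1) (mmul (d+1) (Pmat d B) Z) (Mmat n)
           = mmul (n+1) (mmul (d+1) (Pmat d B) Zb) (Mmat n)"
    by (rule mmul_Mmat_cong)
  moreover have "mmul (d+1) (mmul (d+1) (mtrans Z) (Qmat d A)) Z
               = mmul (d+1) (mmul (d+1) (mtrans Zb) (Qmat d A)) Zb"
    using shift by (intro Qmat_quadratic_form_cong) (simp add: label_shift_def)
  ultimately show ?thesis
    using shift by (simp add: layer_def madd_def label_shift_def)
qed

lemma iterZ_label_shift: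
  assumes "label_shift d n c Z Zb"
  shows "label_shift d n c (iterZ d n A B Z L) (iterZ d n A B Zb L)"
  using assms by (induction L) (simp_all add: layer_label_shift)

lemma Z0_Zbar0_label_shift: "label_shift d n (inner_d d w (xs n)) (Z0 d n xs w) (Zbar0 d n xs w)"
  by (simp add: label_shift_def Z0_def Zbar0_def)

theorem lemma5:
  fixes d n L :: nat
    and px pw :: "(nat \<Rightarrow> real) measure"
    and A B :: "nat \<Rightarrow> mat"
  defines "\<Omega> \<equiv> (PiM {..n} (\<lambda>_. px)) \<Otimes>\<^sub>M pw"
  assumes "d \<ge> 1" and "n \<ge> 1"
    and "prob_space px" and "sets px = sets (PiM {..<d} (\<lambda>_. borel))"
    and "prob_space pw" and "sets pw = sets (PiM {..<d} (\<lambda>_. borel))"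
    and "\<forall>i<L. \<forall>j<d. \<forall>k<d. A i j k = A i k j"
    and "integrable \<Omega> (\<lambda>(xs, w).
           (iterZ d n A B (Z0 d n xs w) L d n + inner_d d w (xs n))\<^sup>2)"
    and "integrable \<Omega> (\<lambda>(xs, w).
           (let Zb = iterZ d n A B (Zbar0 d n xs w) L;
                Y = (\<lambda>i j. if i = 0 then Zb d j else 0);
                IM = msub idm (Mmat n)
            in mtrace (n+1) (mmul (n+1) (mmul 1 (mmul (n+1) IM (mtrans Y)) Y) IM)))"
  shows "(\<integral>(xs, w). (iterZ d n A B (Z0 d n xs w) L d n + inner_d d w (xs n))\<^sup>2 \<partial>\<Omega>)
       = (\<integral>(xs, w).
           (let Zb = iterZ d n A B (Zbar0 d n xs w) L;
                Y = (\<lambda>i j. if i = 0 then Zb d j else 0);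
                IM = msub idm (Mmat n)
            in mtrace (n+1) (mmul (n+1) (mmul 1 (mmul (n+1) IM (mtrans Y)) Y) IM)) \<partial>\<Omega>)"
proof -
  text \<open>The integrands agree everywhere.\<close>
  have "iterZ d n A B (Zbar0 d n xs w) L d n
      = iterZ d n A B (Z0 d n xs w) L d n + inner_d d w (xs n)" for xs w
    using iterZ_label_shift[OF Z0_Zbar0_label_shift] by (simp add: label_shift_def)
  then show ?thesis
    unfolding Let_def mtrace_outer_product_query_block
    by (intro Bochner_Integration.integral_cong) auto
qed

end
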